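(* Let $p\in[1,\infty]$, $\alpha\in[0,1]$ irrational, $\theta\in[0,1)$ and $\lambda\in\mathbb{R}$. Then $\sigma(H_{\lambda,\alpha,0})=\sigma(\widetilde H_{\lambda,\alpha,\theta})=\sigma(H_{\lambda,\alpha,\theta})$.
   Context: $v_{\alpha,\theta}(n)=\chi_{[1-\alpha,1)}(n\alpha+\theta\bmod 1)$, $\widetilde v_{\alpha,\theta}(n)=\chi_{(1-\alpha,1]\cup\{0\}}(n\alpha+\theta\bmod 1)$; $(H_{\lambda,\alpha,\theta}x)_n=x_{n+1}+x_{n-1}+\lambda v_{\alpha,\theta}(n)x_n$ and $(\widetilde H_{\lambda,\alpha,\theta}x)_n=x_{n+1}+x_{n-1}+\lambda\widetilde v_{\alpha,\theta}(n)x_n$, as operators on $\ell^p(\mathbb{Z})$. *)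

theory Defs
  imports "HOL-Analysis.Analysis"
begin

text \<open>Sequence space l^p(Z) of complex sequences, p in [1, infinity] encoded as an ennreal
  (top = infinity).\<close>

definition lp :: "ennreal \<Rightarrow> (int \<Rightarrow> complex) set" where
  "lp p = (if p = top then {x. \<exists>B. \<forall>n. norm (x n) \<le> B}
           else {x. (\<lambda>n. norm (x n) powr enn2real p) summable_on UNIV})"

definition lp_norm :: "ennreal \<Rightarrow> (int \<Rightarrow> complex) \<Rightarrow> real" where
  "lp_norm p x = (if p = top then (SUP n. norm (x n))
      else (infsum (\<lambda>n. norm (x n) powr enn2real p) UNIV) powr (1 / enn2real p))"

text \<open>Bounded linear operators on l^p(Z) (only their action on l^p matters).\<close>

definition bounded_op :: "ennreal \<Rightarrow> ((int \<Rightarrow> complex) \<Rightarrow> (int \<Rightarrow> complex)) \<Rightarrow> bool" where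
  "bounded_op p T \<longleftrightarrow>
     (\<forall>x\<in>lp p. T x \<in> lp p) \<and>
     (\<forall>x\<in>lp p. \<forall>y\<in>lp p. T (\<lambda>n. x n + y n) = (\<lambda>n. T x n + T y n)) \<and>
     (\<forall>x\<in>lp p. \<forall>c. T (\<lambda>n. c * x n) = (\<lambda>n. c * T x n)) \<and>
     (\<exists>C. \<forall>x\<in>lp p. lp_norm p (T x) \<le> C * lp_norm p x)"

definition lp_spectrum :: "ennreal \<Rightarrow> ((int \<Rightarrow> complex) \<Rightarrow> (int \<Rightarrow> complex)) \<Rightarrow> complex set" where
  "lp_spectrum p T = {z. \<not> (\<exists>R. bounded_op p R \<and>
        (\<forall>x\<in>lp p. R (\<lambda>n. T x n - z * x n) = x) \<and>
        (\<forall>x\<in>lp p. (\<lambda>n. T (R x) n - z * R x n) = x))}"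

definition v_pot :: "real \<Rightarrow> real \<Rightarrow> int \<Rightarrow> real" where
  "v_pot \<alpha> \<theta> n = indicator {1 - \<alpha> ..< 1} (frac (of_int n * \<alpha> + \<theta>))"

definition vt_pot :: "real \<Rightarrow> real \<Rightarrow> int \<Rightarrow> real" where
  "vt_pot \<alpha> \<theta> n = indicator ({1 - \<alpha> <.. 1} \<union> {0}) (frac (of_int n * \<alpha> + \<theta>))"

definition H_op :: "real \<Rightarrow> real \<Rightarrow> real \<Rightarrow> (int \<Rightarrow> complex) \<Rightarrow> (int \<Rightarrow> complex)" where
  "H_op lam \<alpha> \<theta> x = (\<lambda>n. x (n + 1) + x (n - 1) + complex_of_real (lam * v_pot \<alpha> \<theta> n) * x n)"

definition Ht_op :: "real \<Rightarrow> real \<Rightarrow> real \<Rightarrow> (int \<Rightarrow> complex) \<Rightarrow> (int \<Rightarrow> complex)" where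
  "Ht_op lam \<alpha> \<theta> x = (\<lambda>n. x (n + 1) + x (n - 1) + complex_of_real (lam * vt_pot \<alpha> \<theta> n) * x n)"

end

theory Submission
  imports Defs
begin

text \<open>
  Both potentials are read off one step function of the phase s = n alpha + theta: v is its
  right-continuous and v~ its left-continuous version. As n alpha mod 1 is dense for irrational
  alpha, every finite window of either potential, at any phase, reappears as a translate of the
  other one at any other phase, after moving the phase a little to the right (for v) or to the
  left (for v~).

  The l^p spectrum of H_V = Delta + V only depends on such local patterns. Suppose every window
  of B occurs in A and H_A - z has a bounded inverse, with bound C. Then H_B - z is injective:
  if (H_B - z) y = 0, cut y off by a tent of width L. On the support of the tent B agrees with a
  translate of A, so the bound C applies to the cut-off, while H_B - z maps it to the commutator
  of H with the tent applied to y, which is O(1/L). Hence every y m is O(1/L), i.e. zero. And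
  H_B - z is onto with the same bound C: solve on translates of A that agree with B on ever
  larger windows and pass to a pointwise convergent subsequence, whose norm is controlled by
  Fatou's lemma.
\<close>

section \<open>Sequence spaces\<close>

lemma enn2real_ge_1: "1 \<le> p \<Longrightarrow> p \<noteq> top \<Longrightarrow> 1 \<le> enn2real p"
  by (metis enn2real_1 enn2real_mono top.not_eq_extremum)

lemma lp_top_iff: "x \<in> lp top \<longleftrightarrow> (\<exists>B. \<forall>n. norm (x n) \<le> B)"
  by (simp add: lp_def)

lemma lp_finite_iff:
  "p \<noteq> top \<Longrightarrow> x \<in> lp p \<longleftrightarrow> (\<lambda>n. norm (x n) powr enn2real p) summable_on UNIV"
  by (simp add: lp_def)

lemma lp_norm_top: "lp_norm top x = (SUP n. norm (x n))"
  by (simp add: lp_norm_def)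

lemma lp_norm_finite:
  "p \<noteq> top \<Longrightarrow> lp_norm p x = (\<Sum>\<^sub>\<infinity>n. norm (x n) powr enn2real p) powr (1 / enn2real p)"
  by (simp add: lp_norm_def)

lemma lp_normI_top:
  assumes "\<And>n. norm (x n) \<le> K"
  shows "x \<in> lp top" "lp_norm top x \<le> K"
  using assms by (auto simp: lp_top_iff lp_norm_top intro: cSUP_least)

lemma lp_normI_finite:
  assumes p: "1 \<le> p" "p \<noteq> top" and K: "0 \<le> K"
    and partial: "\<And>F. finite F \<Longrightarrow> (\<Sum>n\<in>F. norm (x n) powr enn2real p) \<le> K powr enn2real p"
  shows "x \<in> lp p" "lp_norm p x \<le> K"
proof -
  define q where "q = enn2real p"
  have q: "1 \<le> q" using enn2real_ge_1 p q_def by auto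
  have summable: "(\<lambda>n. norm (x n) powr q) summable_on UNIV"
    using partial by (intro nonneg_bdd_above_summable_on bdd_aboveI2) (auto simp: q_def)
  have "(\<Sum>\<^sub>\<infinity>n. norm (x n) powr q) \<le> K powr q"
    using partial by (intro infsum_le_finite_sums[OF summable]) (auto simp: q_def)
  then have "(\<Sum>\<^sub>\<infinity>n. norm (x n) powr q) powr (1/q) \<le> (K powr q) powr (1/q)"
    using q by (intro powr_mono2) (auto intro: infsum_nonneg)
  also have "\<dots> = K"
    using q K by (simp add: powr_powr)
  finally show "x \<in> lp p" "lp_norm p x \<le> K"
    using summable p(2) by (simp_all add: lp_finite_iff lp_norm_finite q_def)
qed

lemma sum_powr_le_lp_norm:
  assumes "1 \<le> p" "p \<noteq> top" "x \<in> lp p" "finite F"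
  shows "(\<Sum>n\<in>F. norm (x n) powr enn2real p) \<le> lp_norm p x powr enn2real p"
proof -
  have "(\<Sum>n\<in>F. norm (x n) powr enn2real p) \<le> (\<Sum>\<^sub>\<infinity>n. norm (x n) powr enn2real p)"
    using assms by (intro finite_sum_le_infsum) (auto simp: lp_finite_iff)
  also have "\<dots> = lp_norm p x powr enn2real p"
    using enn2real_ge_1[OF assms(1,2)]
    by (simp add: lp_norm_finite[OF assms(2)] powr_powr infsum_nonneg)
  finally show ?thesis .
qed

lemma norm_le_lp_norm:
  assumes "1 \<le> p" "x \<in> lp p"
  shows "norm (x m) \<le> lp_norm p x"
proof (cases "p = top")
  case True
  then obtain B where "\<And>n. norm (x n) \<le> B"
    using assms lp_top_iff by auto
  then have "norm (x m) \<le> (SUP n. norm (x n))"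
    by (intro cSUP_upper[OF UNIV_I] bdd_aboveI2)
  then show ?thesis
    using True by (simp add: lp_norm_top)
next
  case False
  define q where "q = enn2real p"
  have q: "0 < q" using enn2real_ge_1 assms False q_def by fastforce
  have le: "norm (x m) powr q \<le> lp_norm p x powr q"
    using sum_powr_le_lp_norm[OF assms(1) False assms(2), of "{m}"] by (simp add: q_def)
  show ?thesis
  proof (rule ccontr)
    assume "\<not> ?thesis"
    then have "lp_norm p x powr q < norm (x m) powr q"
      using q False by (intro powr_less_mono2) (auto simp: lp_norm_finite)
    with le show False
      by simp
  qed
qed

lemma lp_norm_nonneg: "1 \<le> p \<Longrightarrow> x \<in> lp p \<Longrightarrow> 0 \<le> lp_norm p x"
  using norm_le_lp_norm[of p x 0] norm_ge_zero[of "x 0"] by linarith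

lemma lp_dominated:
  assumes p: "1 \<le> p" and x: "x \<in> lp p" and c: "0 \<le> c" and dominated: "\<And>n. norm (w n) \<le> c * norm (x n)"
  shows "w \<in> lp p" "lp_norm p w \<le> c * lp_norm p x"
proof -
  have K: "0 \<le> c * lp_norm p x"
    using c lp_norm_nonneg[OF p x] by simp
  have "w \<in> lp p \<and> lp_norm p w \<le> c * lp_norm p x"
  proof (cases "p = top")
    case True
    have "norm (w n) \<le> c * lp_norm p x" for n
      using dominated[of n] norm_le_lp_norm[OF p x, of n] c by (meson mult_left_mono order_trans)
    then show ?thesis
      using True lp_normI_top by blast
  next
    case False
    define q where "q = enn2real p"
    have q: "1 \<le> q" using enn2real_ge_1 p False q_def by auto
    have "(\<Sum>n\<in>F. norm (w n) powr q) \<le> (c * lp_norm p x) powr q" if "finite F" for F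
    proof -
      have "(\<Sum>n\<in>F. norm (w n) powr q) \<le> (\<Sum>n\<in>F. c powr q * norm (x n) powr q)"
        using dominated c q by (intro sum_mono) (simp add: powr_mono2 flip: powr_mult)
      also have "\<dots> \<le> c powr q * lp_norm p x powr q"
        using sum_powr_le_lp_norm[OF p False x that]
        by (simp add: q_def mult_left_mono flip: sum_distrib_left)
      also have "\<dots> = (c * lp_norm p x) powr q"
        using c lp_norm_nonneg[OF p x] by (simp add: powr_mult)
      finally show ?thesis .
    qed
    then show ?thesis
      using lp_normI_finite[OF p False K] by (simp add: q_def)
  qed
  then show "w \<in> lp p" "lp_norm p w \<le> c * lp_norm p x"
    by auto
qed

lemma lp_scale: "1 \<le> p \<Longrightarrow> x \<in> lp p \<Longrightarrow> (\<lambda>n. c * x n) \<in> lp p"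
  by (rule lp_dominated(1)[of p x "norm c"]) (auto simp: norm_mult)

lemma norm_add_powr_le:
  fixes a b :: "'a::real_normed_vector"
  assumes "0 \<le> q"
  shows "norm (a + b) powr q \<le> 2 powr q * (norm a powr q + norm b powr q)"
proof -
  define m where "m = max (norm a) (norm b)"
  have "norm (a + b) powr q \<le> (2 * m) powr q"
    unfolding m_def using assms by (intro powr_mono2) (auto intro: norm_triangle_le)
  also have "\<dots> = 2 powr q * m powr q"
    by (simp add: powr_mult m_def)
  also have "\<dots> \<le> 2 powr q * (norm a powr q + norm b powr q)"
    by (simp add: m_def max_def)
  finally show ?thesis .
qed

text \<open>A crude quasi-triangle inequality is all that is needed below, so Minkowski's inequality is
  avoided.\<close>

lemma lp_add:
  assumes p: "1 \<le> p" and x: "x \<in> lp p" and y: "y \<in> lp p"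
  shows "(\<lambda>n. x n + y n) \<in> lp p" "lp_norm p (\<lambda>n. x n + y n) \<le> 4 * (lp_norm p x + lp_norm p y)"
proof -
  define K where "K = lp_norm p x + lp_norm p y"
  have nx: "0 \<le> lp_norm p x" and ny: "0 \<le> lp_norm p y"
    using p x y lp_norm_nonneg by auto
  have "(\<lambda>n. x n + y n) \<in> lp p \<and> lp_norm p (\<lambda>n. x n + y n) \<le> 4 * K"
  proof (cases "p = top")
    case True
    have "norm (x n + y n) \<le> 4 * K" for n
      using norm_le_lp_norm[OF p x, of n] norm_le_lp_norm[OF p y, of n] nx ny
        norm_triangle_ineq[of "x n" "y n"]
      by (simp add: K_def)
    then show ?thesis
      using True lp_normI_top[of "\<lambda>n. x n + y n" "4 * K"] by simp
  next
    case False
    define q where "q = enn2real p"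
    have q: "1 \<le> q" using enn2real_ge_1 p False q_def by auto
    have K_powr: "lp_norm p x powr q \<le> K powr q" "lp_norm p y powr q \<le> K powr q"
      using nx ny q by (auto simp: K_def intro: powr_mono2)
    have "(\<Sum>n\<in>F. norm (x n + y n) powr q) \<le> (4 * K) powr q" if "finite F" for F
    proof -
      have "(\<Sum>n\<in>F. norm (x n + y n) powr q)
          \<le> (\<Sum>n\<in>F. 2 powr q * (norm (x n) powr q + norm (y n) powr q))"
        using q by (intro sum_mono norm_add_powr_le) simp
      also have "\<dots> = 2 powr q * ((\<Sum>n\<in>F. norm (x n) powr q) + (\<Sum>n\<in>F. norm (y n) powr q))"
        by (simp add: distrib_left sum.distrib sum_distrib_left)
      also have "\<dots> \<le> 2 powr q * (lp_norm p x powr q + lp_norm p y powr q)"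
        using sum_powr_le_lp_norm[OF p False x that] sum_powr_le_lp_norm[OF p False y that]
        by (simp add: q_def)
      also have "\<dots> \<le> 2 powr q * (2 powr q * K powr q)"
      proof -
        have "2 powr 1 \<le> 2 powr q"
          using q by (intro powr_mono) auto
        then have "lp_norm p x powr q + lp_norm p y powr q \<le> 2 powr q * K powr q"
          using K_powr mult_right_mono[of 2 "2 powr q" "K powr q"] by simp
        then show ?thesis
          by simp
      qed
      also have "\<dots> = (4 * K) powr q"
        using powr_mult[of 2 2 q] powr_mult[of 4 K q] nx ny by (simp add: K_def)
      finally show ?thesis .
    qed
    then show ?thesis
      using lp_normI_finite[OF p False, of "4 * K"] nx ny by (simp add: K_def q_def)
  qed
  then show "(\<lambda>n. x n + y n) \<in> lp p" "lp_norm p (\<lambda>n. x n + y n) \<le> 4 * (lp_norm p x + lp_norm p y)"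
    by (auto simp: K_def)
qed

definition shift :: "int \<Rightarrow> (int \<Rightarrow> 'a) \<Rightarrow> int \<Rightarrow> 'a" where
  "shift k x = (\<lambda>n. x (n + k))"

lemma shift_apply [simp]: "shift k x n = x (n + k)"
  by (simp add: shift_def)

lemma shift_shift [simp]: "shift k (shift l x) = shift (k + l) x"
  by (simp add: shift_def add.assoc)

lemma shift_0 [simp]: "shift 0 x = x"
  by (simp add: shift_def)

lemma bij_plus_int: "bij (\<lambda>n::int. n + k)"
  by (rule bijI') (simp_all, metis diff_add_cancel)

lemma lp_norm_shift [simp]: "lp_norm p (shift k x) = lp_norm p x"
proof -
  have "range (\<lambda>n. norm (x (n + k))) = (\<lambda>n. norm (x n)) ` range (\<lambda>n. n + k)"
    by (simp only: image_image)
  also have "range (\<lambda>n::int. n + k) = UNIV"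
    using bij_plus_int bij_is_surj by blast
  finally have "(SUP n. norm (x (n + k))) = (SUP n. norm (x n))"
    by simp
  moreover have "(\<Sum>\<^sub>\<infinity>n. norm (x (n + k)) powr r) = (\<Sum>\<^sub>\<infinity>n. norm (x n) powr r)" for r
    using infsum_reindex_bij_betw[OF bij_plus_int, of "\<lambda>n. norm (x n) powr r"] by simp
  ultimately show ?thesis
    by (simp add: lp_norm_def shift_def)
qed

lemma shift_in_lp_iff [simp]: "shift k x \<in> lp p \<longleftrightarrow> x \<in> lp p"
proof -
  have "(\<lambda>n. norm (x (n + k)) powr r) summable_on UNIV \<longleftrightarrow> (\<lambda>n. norm (x n) powr r) summable_on UNIV" for r
    using summable_on_reindex_bij_betw[OF bij_plus_int, of "\<lambda>n. norm (x n) powr r"] by simp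
  moreover have "(\<forall>n. norm (x (n + k)) \<le> B) \<longleftrightarrow> (\<forall>n. norm (x n) \<le> B)" for B
    by (metis diff_add_cancel)
  ultimately show ?thesis
    by (simp add: lp_def shift_def)
qed

lemma lp_pointwise_limit:
  assumes p: "1 \<le> p" and Y: "\<And>j. Y j \<in> lp p" and K: "\<And>j. lp_norm p (Y j) \<le> K"
    and lim: "\<And>n. (\<lambda>j. Y j n) \<longlonglongrightarrow> y n"
  shows "y \<in> lp p" "lp_norm p y \<le> K"
proof -
  have K0: "0 \<le> K"
    using lp_norm_nonneg[OF p Y] K order_trans by blast
  have "y \<in> lp p \<and> lp_norm p y \<le> K"
  proof (cases "p = top")
    case True
    have "norm (y n) \<le> K" for n
    proof (rule LIMSEQ_le_const2)
      show "(\<lambda>j. norm (Y j n)) \<longlonglongrightarrow> norm (y n)"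
        by (intro tendsto_intros lim)
      show "\<exists>N. \<forall>j\<ge>N. norm (Y j n) \<le> K"
        using norm_le_lp_norm[OF p Y] K order_trans by blast
    qed
    then show ?thesis
      using True lp_normI_top by blast
  next
    case False
    define q where "q = enn2real p"
    have q: "1 \<le> q" using enn2real_ge_1 p False q_def by auto
    have "(\<Sum>n\<in>F. norm (y n) powr q) \<le> K powr q" if "finite F" for F
    proof (rule LIMSEQ_le_const2)
      show "(\<lambda>j. \<Sum>n\<in>F. norm (Y j n) powr q) \<longlonglongrightarrow> (\<Sum>n\<in>F. norm (y n) powr q)"
        using q by (intro tendsto_sum tendsto_powr' tendsto_intros lim) auto
      have "(\<Sum>n\<in>F. norm (Y j n) powr q) \<le> K powr q" for j
        using sum_powr_le_lp_norm[OF p False Y that] K[of j] lp_norm_nonneg[OF p Y] q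
        by (metis q_def powr_mono2 order_trans zero_le_one order.trans)
      then show "\<exists>N. \<forall>j\<ge>N. (\<Sum>n\<in>F. norm (Y j n) powr q) \<le> K powr q"
        by blast
    qed
    then show ?thesis
      using lp_normI_finite[OF p False K0] by (simp add: q_def)
  qed
  then show "y \<in> lp p" "lp_norm p y \<le> K"
    by auto
qed

lemma bounded_pointwise_convergent_subseq:
  fixes Y :: "nat \<Rightarrow> 'i::countable \<Rightarrow> 'a::{heine_borel,real_normed_vector}"
  assumes "\<And>j n. norm (Y j n) \<le> B"
  obtains r y where "strict_mono r" "\<And>n. (\<lambda>j. Y (r j) n) \<longlonglongrightarrow> y n"
proof -
  have "compact (PiE UNIV (\<lambda>_::'i. cball (0::'a) B))"
    using compactin_PiE[of "\<lambda>_. euclidean" UNIV "\<lambda>_. cball (0::'a) B"]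
    by (simp add: euclidean_product_topology)
  moreover have "Y j \<in> PiE UNIV (\<lambda>_. cball 0 B)" for j
    using assms by auto
  ultimately obtain y r where r: "strict_mono r" and lim: "(Y \<circ> r) \<longlonglongrightarrow> y"
    using compact_imp_seq_compact unfolding seq_compact_def by metis
  have "(\<lambda>j. Y (r j) n) \<longlonglongrightarrow> y n" for n
    using continuous_on_tendsto_compose[OF continuous_on_product_coordinates lim] by (simp add: o_def)
  with r show thesis by (rule that)
qed

definition windows_occur_in :: "(int \<Rightarrow> 'a) \<Rightarrow> (int \<Rightarrow> 'a) \<Rightarrow> bool" where
  "windows_occur_in b a \<longleftrightarrow> (\<forall>N::nat. \<exists>k. \<forall>n. \<bar>n\<bar> \<le> int N \<longrightarrow> b n = a (n + k))"

lemma windows_occur_inE: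
  assumes "windows_occur_in b a"
  obtains k where "\<And>n. \<bar>n\<bar> \<le> int N \<Longrightarrow> b n = a (n + k)"
  using assms unfolding windows_occur_in_def by blast

lemma windows_occur_in_map:
  "windows_occur_in b a \<Longrightarrow> windows_occur_in (\<lambda>n. f (b n)) (\<lambda>n. f (a n))"
  unfolding windows_occur_in_def by metis

lemma windows_occur_in_range: "windows_occur_in b a \<Longrightarrow> b n \<in> range a"
  by (rule windows_occur_inE[of b a "nat \<bar>n\<bar>"]) auto

section \<open>Discrete Schroedinger operators\<close>

text \<open>The potential is complex, so that H_V - z is again a Schroedinger operator, H_(V - z).\<close>

definition schroedinger_op :: "(int \<Rightarrow> complex) \<Rightarrow> (int \<Rightarrow> complex) \<Rightarrow> int \<Rightarrow> complex" where
  "schroedinger_op V x = (\<lambda>n. x (n + 1) + x (n - 1) + V n * x n)"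

lemma schroedinger_op_add:
  "schroedinger_op V (\<lambda>n. x n + y n) = (\<lambda>n. schroedinger_op V x n + schroedinger_op V y n)"
  by (simp add: schroedinger_op_def fun_eq_iff algebra_simps)

lemma schroedinger_op_scale:
  "schroedinger_op V (\<lambda>n. c * x n) = (\<lambda>n. c * schroedinger_op V x n)"
  by (simp add: schroedinger_op_def fun_eq_iff algebra_simps)

lemma schroedinger_op_shift:
  "schroedinger_op (shift k V) (shift k x) = shift k (schroedinger_op V x)"
  by (simp add: schroedinger_op_def fun_eq_iff algebra_simps)

lemma schroedinger_op_local:
  "V n = W n \<or> x n = 0 \<Longrightarrow> schroedinger_op V x n = schroedinger_op W x n"
  by (auto simp: schroedinger_op_def)

lemma schroedinger_op_mult:
  "schroedinger_op V (\<lambda>n. \<phi> n * x n) n = \<phi> n * schroedinger_op V x n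
     + (\<phi> (n + 1) - \<phi> n) * x (n + 1) + (\<phi> (n - 1) - \<phi> n) * x (n - 1)"
  by (simp add: schroedinger_op_def algebra_simps)

lemma schroedinger_op_lp:
  assumes "1 \<le> p" "\<And>n. norm (V n) \<le> M" "x \<in> lp p"
  shows "schroedinger_op V x \<in> lp p"
proof -
  have M: "0 \<le> M" using assms(2)[of 0] norm_ge_zero[of "V 0"] by linarith
  have "shift 1 x \<in> lp p" "shift (-1) x \<in> lp p"
    using assms(3) by simp_all
  then have "(\<lambda>n. shift 1 x n + shift (-1) x n) \<in> lp p"
    by (rule lp_add(1)[OF assms(1)])
  moreover have "(\<lambda>n. V n * x n) \<in> lp p"
    by (rule lp_dominated(1)[OF assms(1,3) M]) (auto simp: norm_mult intro: mult_right_mono assms(2))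
  ultimately have "(\<lambda>n. (shift 1 x n + shift (-1) x n) + V n * x n) \<in> lp p"
    by (rule lp_add(1)[OF assms(1)])
  then show ?thesis
    by (simp add: schroedinger_op_def)
qed

definition lp_invertible :: "ennreal \<Rightarrow> ((int \<Rightarrow> complex) \<Rightarrow> int \<Rightarrow> complex) \<Rightarrow> bool" where
  "lp_invertible p T \<longleftrightarrow>
     (\<exists>R. bounded_op p R \<and> (\<forall>x\<in>lp p. R (T x) = x) \<and> (\<forall>x\<in>lp p. T (R x) = x))"

lemma lp_spectrum_schroedinger_op:
  "lp_spectrum p (schroedinger_op V) = {z. \<not> lp_invertible p (schroedinger_op (\<lambda>n. V n - z))}"
proof -
  have "(\<lambda>n. schroedinger_op V x n - z * x n) = schroedinger_op (\<lambda>n. V n - z) x" for z x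
    by (simp add: schroedinger_op_def fun_eq_iff algebra_simps)
  then show ?thesis
    by (simp add: lp_spectrum_def lp_invertible_def)
qed

definition lp_bounded_below :: "ennreal \<Rightarrow> ((int \<Rightarrow> complex) \<Rightarrow> int \<Rightarrow> complex) \<Rightarrow> real \<Rightarrow> bool" where
  "lp_bounded_below p T C \<longleftrightarrow> (\<forall>u\<in>lp p. lp_norm p u \<le> C * lp_norm p (T u))"

definition lp_solvable :: "ennreal \<Rightarrow> ((int \<Rightarrow> complex) \<Rightarrow> int \<Rightarrow> complex) \<Rightarrow> real \<Rightarrow> bool" where
  "lp_solvable p T C \<longleftrightarrow> (\<forall>x\<in>lp p. \<exists>u\<in>lp p. T u = x \<and> lp_norm p u \<le> C * lp_norm p x)"

lemma lp_invertibleD: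
  assumes "1 \<le> p" "lp_invertible p T" and T_lp: "\<And>x. x \<in> lp p \<Longrightarrow> T x \<in> lp p"
  obtains C where "0 \<le> C" "lp_bounded_below p T C" "lp_solvable p T C"
proof -
  obtain R where "bounded_op p R" and RT: "\<forall>x\<in>lp p. R (T x) = x" and TR: "\<forall>x\<in>lp p. T (R x) = x"
    using assms(2) unfolding lp_invertible_def by blast
  then obtain C where R_lp: "\<forall>x\<in>lp p. R x \<in> lp p"
    and R_bound: "\<forall>x\<in>lp p. lp_norm p (R x) \<le> C * lp_norm p x"
    unfolding bounded_op_def by blast
  have R_abs: "lp_norm p (R x) \<le> \<bar>C\<bar> * lp_norm p x" if "x \<in> lp p" for x
    using R_bound that lp_norm_nonneg[OF assms(1) that]
    by (meson abs_ge_self mult_right_mono order_trans)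
  have "lp_bounded_below p T \<bar>C\<bar>"
    unfolding lp_bounded_below_def
  proof
    fix u assume "u \<in> lp p"
    then show "lp_norm p u \<le> \<bar>C\<bar> * lp_norm p (T u)"
      using R_abs[OF T_lp] RT by simp
  qed
  moreover have "lp_solvable p T \<bar>C\<bar>"
    unfolding lp_solvable_def using R_lp TR R_abs by blast
  ultimately show thesis
    using that abs_ge_zero by blast
qed

lemma lp_invertibleI:
  assumes p: "1 \<le> p" and T_lp: "\<And>x. x \<in> lp p \<Longrightarrow> T x \<in> lp p"
    and T_add: "\<And>x y. T (\<lambda>n. x n + y n) = (\<lambda>n. T x n + T y n)"
    and T_scale: "\<And>c x. T (\<lambda>n. c * x n) = (\<lambda>n. c * T x n)"
    and T_inj: "\<And>u. u \<in> lp p \<Longrightarrow> T u = (\<lambda>n. 0) \<Longrightarrow> u = (\<lambda>n. 0)"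
    and T_solv: "lp_solvable p T C"
  shows "lp_invertible p T"
proof -
  have unique: "u = v" if "T u = T v" "u \<in> lp p" "v \<in> lp p" for u v
  proof -
    have "(\<lambda>n. (-1) * v n) \<in> lp p"
      by (rule lp_scale[OF p that(3)])
    then have "(\<lambda>n. u n + (-1) * v n) \<in> lp p"
      by (rule lp_add(1)[OF p that(2)])
    moreover have "T (\<lambda>n. u n + (-1) * v n) = (\<lambda>n. 0)"
      using that(1) by (simp only: T_add T_scale) simp
    ultimately have "(\<lambda>n. u n + (-1) * v n) = (\<lambda>n. 0)"
      by (rule T_inj)
    then show ?thesis
      by (simp add: fun_eq_iff)
  qed
  define R where "R x = (SOME u. u \<in> lp p \<and> T u = x \<and> lp_norm p u \<le> C * lp_norm p x)" for x
  have R: "R x \<in> lp p" "T (R x) = x" "lp_norm p (R x) \<le> C * lp_norm p x" if "x \<in> lp p" for x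
    using someI_ex[OF T_solv[unfolded lp_solvable_def, rule_format, OF that, unfolded Bex_def]]
    unfolding R_def by auto
  have "bounded_op p R"
    unfolding bounded_op_def
  proof (intro conjI ballI allI exI)
    fix x y assume "x \<in> lp p" "y \<in> lp p"
    then show "R (\<lambda>n. x n + y n) = (\<lambda>n. R x n + R y n)"
      using p R by (simp add: unique T_add lp_add)
  next
    fix x c assume "x \<in> lp p"
    then show "R (\<lambda>n. c * x n) = (\<lambda>n. c * R x n)"
      using p R by (simp add: unique T_scale lp_scale)
  qed (use R in auto)
  moreover have "R (T x) = x" if "x \<in> lp p" for x
    using that R T_lp by (simp add: unique)
  ultimately show ?thesis
    unfolding lp_invertible_def using R(2) by blast
qed

lemma lp_bounded_below_shift:
  assumes "lp_bounded_below p (schroedinger_op V) C"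
  shows "lp_bounded_below p (schroedinger_op (shift k V)) C"
  unfolding lp_bounded_below_def
proof
  fix u :: "int \<Rightarrow> complex" assume "u \<in> lp p"
  then have "lp_norm p (shift (-k) u) \<le> C * lp_norm p (schroedinger_op V (shift (-k) u))"
    using assms unfolding lp_bounded_below_def by (metis shift_in_lp_iff)
  moreover have "schroedinger_op (shift k V) u = shift k (schroedinger_op V (shift (-k) u))"
    using schroedinger_op_shift[of k V "shift (-k) u"] by simp
  ultimately show "lp_norm p u \<le> C * lp_norm p (schroedinger_op (shift k V) u)"
    by simp
qed

lemma lp_solvable_shift:
  assumes "lp_solvable p (schroedinger_op V) C"
  shows "lp_solvable p (schroedinger_op (shift k V)) C"
  unfolding lp_solvable_def
proof
  fix x :: "int \<Rightarrow> complex" assume "x \<in> lp p"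
  then have "shift (-k) x \<in> lp p" by simp
  then obtain u where u: "u \<in> lp p" "schroedinger_op V u = shift (-k) x"
    "lp_norm p u \<le> C * lp_norm p (shift (-k) x)"
    using assms unfolding lp_solvable_def by blast
  have "schroedinger_op (shift k V) (shift k u) = x"
    by (simp add: schroedinger_op_shift u(2))
  then show "\<exists>u\<in>lp p. schroedinger_op (shift k V) u = x \<and> lp_norm p u \<le> C * lp_norm p x"
    using u by (intro bexI[of _ "shift k u"]) auto
qed

section \<open>Spectra only depend on local patterns\<close>

definition tent :: "int \<Rightarrow> real \<Rightarrow> int \<Rightarrow> real" where
  "tent m L n = max 0 (1 - \<bar>of_int (n - m)\<bar> / L)"

lemma tent_nonneg: "0 \<le> tent m L n"
  by (simp add: tent_def)

lemma tent_le_1: "0 < L \<Longrightarrow> tent m L n \<le> 1"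
  by (simp add: tent_def)

lemma tent_center [simp]: "tent m L m = 1"
  by (simp add: tent_def)

lemma tent_support: "0 < L \<Longrightarrow> tent m L n \<noteq> 0 \<Longrightarrow> \<bar>of_int (n - m)\<bar> < L"
  by (auto simp: tent_def max_def field_simps split: if_splits)

lemma tent_lipschitz:
  assumes "0 < L"
  shows "\<bar>tent m L i - tent m L j\<bar> \<le> \<bar>of_int (i - j)\<bar> / L"
proof -
  have "\<bar>tent m L i - tent m L j\<bar> \<le> \<bar>\<bar>of_int (j - m)\<bar> / L - \<bar>of_int (i - m)\<bar> / L\<bar>"
    unfolding tent_def by linarith
  also have "\<dots> = \<bar>\<bar>of_int (j - m)\<bar> - \<bar>of_int (i - m)\<bar>\<bar> / L"
    using assms by (simp add: diff_divide_distrib[symmetric])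
  also have "\<dots> \<le> \<bar>of_int (i - j)\<bar> / L"
    using assms abs_triangle_ineq3[of "of_int (j - m)" "of_int (i - m) :: real"]
    by (intro divide_right_mono) (auto simp: abs_minus_commute)
  finally show ?thesis .
qed

lemma schroedinger_op_mult_commutator:
  fixes V \<phi> :: "int \<Rightarrow> complex"
  assumes p: "1 \<le> p" and y: "y \<in> lp p" and \<delta>: "0 \<le> \<delta>"
    and lipschitz: "\<And>n. norm (\<phi> (n + 1) - \<phi> n) \<le> \<delta>"
  defines "c \<equiv> \<lambda>n. schroedinger_op V (\<lambda>n. \<phi> n * y n) n - \<phi> n * schroedinger_op V y n"
  shows "c \<in> lp p" "lp_norm p c \<le> 8 * \<delta> * lp_norm p y"
proof -
  define c1 where "c1 n = (\<phi> (n + 1) - \<phi> n) * y (n + 1)" for n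
  define c2 where "c2 n = (\<phi> (n - 1) - \<phi> n) * y (n - 1)" for n
  have "norm (c1 n) \<le> \<delta> * norm (shift 1 y n)" for n
    unfolding c1_def norm_mult shift_apply by (rule mult_right_mono[OF lipschitz]) simp
  then have c1: "c1 \<in> lp p" "lp_norm p c1 \<le> \<delta> * lp_norm p y"
    using lp_dominated[OF p _ \<delta>, of "shift 1 y" c1] y by simp_all
  have "norm (\<phi> (n - 1) - \<phi> n) \<le> \<delta>" for n
    using lipschitz[of "n - 1"] by (simp add: norm_minus_commute)
  then have "norm (c2 n) \<le> \<delta> * norm (shift (-1) y n)" for n
    using mult_right_mono[of _ \<delta> "norm (y (n - 1))"] by (simp add: c2_def norm_mult)
  then have c2: "c2 \<in> lp p" "lp_norm p c2 \<le> \<delta> * lp_norm p y"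
    using lp_dominated[OF p _ \<delta>, of "shift (-1) y" c2] y by simp_all
  have "c = (\<lambda>n. c1 n + c2 n)"
    by (simp add: c_def c1_def c2_def schroedinger_op_mult fun_eq_iff)
  then show "c \<in> lp p" "lp_norm p c \<le> 8 * \<delta> * lp_norm p y"
    using lp_add[OF p c1(1) c2(1)] c1(2) c2(2) by simp_all
qed

lemma schroedinger_op_injective_if_windows:
  assumes p: "1 \<le> p" and windows: "windows_occur_in B A"
    and below: "lp_bounded_below p (schroedinger_op A) C" and C: "0 \<le> C"
    and y: "y \<in> lp p" and Sy: "schroedinger_op B y = (\<lambda>n. 0)"
  shows "y = (\<lambda>n. 0)"
proof
  fix m
  have bound: "norm (y m) \<le> C * (8 * (1 / real L) * lp_norm p y)" if L: "1 \<le> L" for L :: nat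
  proof -
    define \<phi> where "\<phi> n = complex_of_real (tent m (real L) n)" for n
    define w where "w = (\<lambda>n. \<phi> n * y n)"
    have L0: "0 < real L"
      using L by simp
    have "norm (w n) \<le> 1 * norm (y n)" for n
      using tent_nonneg tent_le_1[OF L0] by (simp add: w_def \<phi>_def norm_mult mult_left_le_one_le)
    then have w: "w \<in> lp p"
      using lp_dominated(1)[OF p y, of 1 w] by simp
    obtain k where k: "\<And>n. \<bar>n\<bar> \<le> int (nat \<bar>m\<bar> + L) \<Longrightarrow> B n = A (n + k)"
      using windows_occur_inE[OF windows] by blast
    have "schroedinger_op (shift k A) w = (\<lambda>n. schroedinger_op B w n - \<phi> n * schroedinger_op B y n)"
    proof
      fix n
      have "\<bar>n\<bar> \<le> int (nat \<bar>m\<bar> + L)" if "tent m (real L) n \<noteq> 0"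
        using tent_support[OF L0 that] by linarith
      then have "shift k A n = B n \<or> w n = 0"
        using k[of n] by (cases "tent m (real L) n = 0") (auto simp: w_def \<phi>_def)
      then show "schroedinger_op (shift k A) w n = schroedinger_op B w n - \<phi> n * schroedinger_op B y n"
        using schroedinger_op_local Sy by (simp add: fun_eq_iff)
    qed
    moreover have "norm (\<phi> (n + 1) - \<phi> n) \<le> 1 / real L" for n
      using tent_lipschitz[OF L0, of m "n + 1" n] by (simp add: \<phi>_def flip: of_real_diff)
    ultimately have "lp_norm p (schroedinger_op (shift k A) w) \<le> 8 * (1 / real L) * lp_norm p y"
      using schroedinger_op_mult_commutator(2)[OF p y, where \<delta> = "1 / real L" and \<phi> = \<phi> and V = B]
      by (simp add: w_def)
    then have "lp_norm p w \<le> C * (8 * (1 / real L) * lp_norm p y)"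
      using lp_bounded_below_shift[OF below] w C unfolding lp_bounded_below_def
      by (meson mult_left_mono order_trans)
    moreover have "norm (y m) \<le> lp_norm p w"
      using norm_le_lp_norm[OF p w, of m] by (simp add: w_def \<phi>_def)
    ultimately show ?thesis
      by linarith
  qed
  have "(\<lambda>L. C * (8 * (1 / real L) * lp_norm p y)) \<longlonglongrightarrow> 0"
    by (intro tendsto_mult_right_zero tendsto_mult_left_zero lim_1_over_n)
  then have "norm (y m) \<le> 0"
    by (rule LIMSEQ_le_const) (use bound in blast)
  then show "y m = 0"
    by simp
qed

lemma windows_approximate_solutions:
  assumes windows: "windows_occur_in B A" and solvable: "lp_solvable p (schroedinger_op A) C"
    and x: "x \<in> lp p"
  shows "\<exists>u. u \<in> lp p \<and> lp_norm p u \<le> C * lp_norm p x \<and>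
           (\<forall>n. \<bar>n\<bar> \<le> int N \<longrightarrow> schroedinger_op B u n = x n)"
proof -
  obtain k where k: "\<And>n. \<bar>n\<bar> \<le> int N \<Longrightarrow> B n = A (n + k)"
    using windows_occur_inE[OF windows] by blast
  obtain u where u: "u \<in> lp p" "schroedinger_op (shift k A) u = x" "lp_norm p u \<le> C * lp_norm p x"
    using lp_solvable_shift[OF solvable] x unfolding lp_solvable_def by blast
  have "schroedinger_op B u n = x n" if "\<bar>n\<bar> \<le> int N" for n
    using schroedinger_op_local[of B n "shift k A" u] k[OF that] u(2) by auto
  with u show ?thesis
    by blast
qed

lemma lp_solvable_if_windows:
  assumes p: "1 \<le> p" and windows: "windows_occur_in B A"
    and solvable: "lp_solvable p (schroedinger_op A) C"
  shows "lp_solvable p (schroedinger_op B) C"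
  unfolding lp_solvable_def
proof
  fix x assume x: "x \<in> lp p"
  have "\<forall>j. \<exists>u. u \<in> lp p \<and> lp_norm p u \<le> C * lp_norm p x \<and>
      (\<forall>n. \<bar>n\<bar> \<le> int j \<longrightarrow> schroedinger_op B u n = x n)"
    using windows_approximate_solutions[OF windows solvable x] by blast
  then obtain Y where "\<forall>j. Y j \<in> lp p \<and> lp_norm p (Y j) \<le> C * lp_norm p x \<and>
      (\<forall>n. \<bar>n\<bar> \<le> int j \<longrightarrow> schroedinger_op B (Y j) n = x n)"
    by (rule choice[THEN exE])
  then have Y: "\<And>j. Y j \<in> lp p" "\<And>j. lp_norm p (Y j) \<le> C * lp_norm p x"
    and Y_solves: "\<And>j n. \<bar>n\<bar> \<le> int j \<Longrightarrow> schroedinger_op B (Y j) n = x n"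
    by blast+
  have Y_bounded: "norm (Y j n) \<le> C * lp_norm p x" for j n
    using norm_le_lp_norm[OF p Y(1), of j n] Y(2)[of j] by linarith
  obtain r y where r: "strict_mono r" and lim: "\<And>n. (\<lambda>j. Y (r j) n) \<longlonglongrightarrow> y n"
    using bounded_pointwise_convergent_subseq[of Y, OF Y_bounded] by blast
  have y: "y \<in> lp p" "lp_norm p y \<le> C * lp_norm p x"
    using lp_pointwise_limit[OF p Y(1) Y(2) lim] .
  have "schroedinger_op B y n = x n" for n
  proof -
    have "(\<lambda>j. schroedinger_op B (Y (r j)) n) \<longlonglongrightarrow> schroedinger_op B y n"
      unfolding schroedinger_op_def by (intro tendsto_intros lim)
    moreover have "\<forall>\<^sub>F j in sequentially. schroedinger_op B (Y (r j)) n = x n"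
    proof (rule eventually_sequentiallyI)
      fix j assume "nat \<bar>n\<bar> \<le> j"
      then have "\<bar>n\<bar> \<le> int (r j)"
        using seq_suble[OF r, of j] by linarith
      then show "schroedinger_op B (Y (r j)) n = x n"
        by (rule Y_solves)
    qed
    ultimately have "(\<lambda>j. x n) \<longlonglongrightarrow> schroedinger_op B y n"
      by (rule Lim_transform_eventually)
    then show ?thesis
      by (simp add: LIMSEQ_const_iff)
  qed
  with y show "\<exists>u\<in>lp p. schroedinger_op B u = x \<and> lp_norm p u \<le> C * lp_norm p x"
    by (intro bexI[of _ y]) auto
qed

theorem lp_invertible_if_windows:
  assumes p: "1 \<le> p" and A_bounded: "\<And>n. norm (A n) \<le> M" and windows: "windows_occur_in B A"
    and invertible: "lp_invertible p (schroedinger_op A)"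
  shows "lp_invertible p (schroedinger_op B)"
proof -
  have B_bounded: "norm (B n) \<le> M" for n
    using windows_occur_in_range[OF windows, of n] A_bounded by auto
  obtain C where C: "0 \<le> C" "lp_bounded_below p (schroedinger_op A) C"
    "lp_solvable p (schroedinger_op A) C"
    using lp_invertibleD[OF p invertible schroedinger_op_lp[OF p A_bounded]] by blast
  show ?thesis
  proof (rule lp_invertibleI[OF p])
    show "schroedinger_op B x \<in> lp p" if "x \<in> lp p" for x
      using schroedinger_op_lp[OF p B_bounded that] .
    show "u = (\<lambda>n. 0)" if "u \<in> lp p" "schroedinger_op B u = (\<lambda>n. 0)" for u
      using schroedinger_op_injective_if_windows[OF p windows C(2,1) that] .
    show "lp_solvable p (schroedinger_op B) C"
      using lp_solvable_if_windows[OF p windows C(3)] .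
  qed (simp_all add: schroedinger_op_add schroedinger_op_scale)
qed

corollary lp_spectrum_eq_if_windows:
  assumes "1 \<le> p" "\<And>n. norm (A n) \<le> M" "windows_occur_in B A" "windows_occur_in A B"
  shows "lp_spectrum p (schroedinger_op A) = lp_spectrum p (schroedinger_op B)"
proof -
  have B_bounded: "norm (B n) \<le> M" for n
    using windows_occur_in_range[OF assms(3), of n] assms(2) by auto
  have "lp_invertible p (schroedinger_op (\<lambda>n. A n - z)) \<longleftrightarrow> lp_invertible p (schroedinger_op (\<lambda>n. B n - z))"
    for z
  proof -
    have A_z: "\<And>n. norm (A n - z) \<le> M + norm z" and B_z: "\<And>n. norm (B n - z) \<le> M + norm z"
      using assms(2) B_bounded norm_triangle_ineq4[of _ z] by (smt (verit))+
    have "windows_occur_in (\<lambda>n. B n - z) (\<lambda>n. A n - z)" "windows_occur_in (\<lambda>n. A n - z) (\<lambda>n. B n - z)"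
      using windows_occur_in_map[OF assms(3), of "\<lambda>t. t - z"] windows_occur_in_map[OF assms(4), of "\<lambda>t. t - z"]
      by simp_all
    then show ?thesis
      using lp_invertible_if_windows[OF assms(1), where A = "\<lambda>n. A n - z", OF A_z]
        lp_invertible_if_windows[OF assms(1), where A = "\<lambda>n. B n - z", OF B_z] by blast
  qed
  then show ?thesis
    by (simp add: lp_spectrum_schroedinger_op)
qed

section \<open>Sturmian potentials\<close>

lemma windows_occur_in_right_limits:
  fixes f g :: "real \<Rightarrow> 'a"
  assumes irrational: "\<alpha> \<notin> \<rat>" and periodic: "\<And>s m. f (s + of_int m) = f s"
    and right_limit: "\<And>s. \<exists>e>0. \<forall>d. 0 < d \<and> d < e \<longrightarrow> f (s + d) = g s"
  shows "windows_occur_in (\<lambda>n. g (of_int n * \<alpha> + \<theta>')) (\<lambda>n. f (of_int n * \<alpha> + \<theta>))"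
  unfolding windows_occur_in_def
proof
  fix N :: nat
  have "\<forall>s. \<exists>e. 0 < e \<and> (\<forall>d. 0 < d \<and> d < e \<longrightarrow> f (s + d) = g s)"
    using right_limit by blast
  then obtain e where e: "\<And>s. 0 < e s" "\<And>s d. 0 < d \<Longrightarrow> d < e s \<Longrightarrow> f (s + d) = g s"
    by (metis choice)
  define S where "S = (\<lambda>n. of_int n * \<alpha> + \<theta>') ` {- int N..int N}"
  have S: "finite (e ` S)" "e ` S \<noteq> {}"
    by (auto simp: S_def)
  define \<epsilon> where "\<epsilon> = Min (e ` S)"
  have \<epsilon>: "0 < \<epsilon>" "\<And>s. s \<in> S \<Longrightarrow> \<epsilon> \<le> e s"
    using S e(1) by (auto simp: \<epsilon>_def)
  have "0 < \<epsilon> / 2"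
    using \<epsilon>(1) by simp
  then obtain h k where hk: "\<bar>of_int k * \<alpha> - of_int h - (\<theta>' - \<theta> + \<epsilon> / 2)\<bar> < \<epsilon> / 2"
    using sequence_of_fractional_parts_is_dense[OF irrational, where \<alpha> = "\<theta>' - \<theta> + \<epsilon> / 2"] by blast
  define d where "d = of_int k * \<alpha> + \<theta> - \<theta>' - of_int h"
  have d: "0 < d" "d < \<epsilon>"
    using hk unfolding d_def abs_less_iff by linarith+
  have "g (of_int n * \<alpha> + \<theta>') = f (of_int (n + k) * \<alpha> + \<theta>)" if "\<bar>n\<bar> \<le> int N" for n
  proof -
    have "of_int n * \<alpha> + \<theta>' \<in> S"
      using that unfolding S_def by (intro imageI) auto
    then have "f (of_int n * \<alpha> + \<theta>' + d) = g (of_int n * \<alpha> + \<theta>')"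
      using d \<epsilon>(2) by (intro e(2)) force+
    moreover have "of_int (n + k) * \<alpha> + \<theta> = of_int n * \<alpha> + \<theta>' + d + of_int h"
      by (simp add: d_def algebra_simps)
    ultimately show ?thesis
      by (simp add: periodic)
  qed
  then show "\<exists>k. \<forall>n. \<bar>n\<bar> \<le> int N \<longrightarrow> g (of_int n * \<alpha> + \<theta>') = f (of_int (n + k) * \<alpha> + \<theta>)"
    by blast
qed

lemma windows_occur_in_left_limits:
  fixes f g :: "real \<Rightarrow> 'a"
  assumes irrational: "\<alpha> \<notin> \<rat>" and periodic: "\<And>s m. f (s + of_int m) = f s"
    and left_limit: "\<And>s. \<exists>e>0. \<forall>d. 0 < d \<and> d < e \<longrightarrow> f (s - d) = g s"
  shows "windows_occur_in (\<lambda>n. g (of_int n * \<alpha> + \<theta>')) (\<lambda>n. f (of_int n * \<alpha> + \<theta>))"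
proof -
  have "windows_occur_in (\<lambda>n. g (- (of_int n * - \<alpha> + - \<theta>'))) (\<lambda>n. f (- (of_int n * - \<alpha> + - \<theta>)))"
  proof (rule windows_occur_in_right_limits[where f = "\<lambda>s. f (- s)" and g = "\<lambda>s. g (- s)"])
    show "- \<alpha> \<notin> \<rat>"
      using irrational by simp
    show "f (- (s + of_int m)) = f (- s)" for s m
      using periodic[of "- s" "- m"] by simp
    show "\<exists>e>0. \<forall>d. 0 < d \<and> d < e \<longrightarrow> f (- (s + d)) = g (- s)" for s
      using left_limit[of "- s"] by simp
  qed
  then show ?thesis
    by (simp add: add.commute)
qed

lemma sturmian_right_limit:
  assumes "0 < \<alpha>" "\<alpha> < 1"
  shows "\<exists>e>0. \<forall>d. 0 < d \<and> d < e \<longrightarrow>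
    indicator ({1 - \<alpha><..1} \<union> {0}) (frac (s + d)) = (indicator {1 - \<alpha>..<1} (frac s) :: real)"
proof -
  define t where "t = frac s"
  have t: "0 \<le> t" "t < 1" "s - t \<in> \<int>"
    by (simp_all add: t_def frac_lt_1) (simp add: frac_def)
  define e where "e = (if t < 1 - \<alpha> then 1 - \<alpha> - t else 1 - t)"
  have "0 < e" using t by (simp add: e_def)
  moreover have "indicator ({1 - \<alpha><..1} \<union> {0}) (frac (s + d)) = (indicator {1 - \<alpha>..<1} t :: real)"
    if "0 < d" "d < e" for d
  proof -
    have "frac (s + d) = t + d"
      using t that assms by (simp add: frac_unique_iff e_def split: if_splits)
    then show ?thesis
      using t that by (simp add: e_def indicator_def split: if_splits)
  qed
  ultimately show ?thesis
    unfolding t_def by blast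
qed

lemma sturmian_left_limit:
  assumes "0 < \<alpha>" "\<alpha> < 1"
  shows "\<exists>e>0. \<forall>d. 0 < d \<and> d < e \<longrightarrow>
    indicator {1 - \<alpha>..<1} (frac (s - d)) = (indicator ({1 - \<alpha><..1} \<union> {0}) (frac s) :: real)"
proof -
  define t where "t = frac s"
  have t: "0 \<le> t" "t < 1" "s - t \<in> \<int>"
    by (simp_all add: t_def frac_lt_1) (simp add: frac_def)
  define e where "e = (if t = 0 then \<alpha> else if 1 - \<alpha> < t then t - (1 - \<alpha>) else t)"
  have "0 < e" using t assms by (auto simp: e_def)
  moreover have "indicator {1 - \<alpha>..<1} (frac (s - d)) = (indicator ({1 - \<alpha><..1} \<union> {0}) t :: real)"
    if "0 < d" "d < e" for d
  proof (cases "t = 0")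
    case True
    then have "frac (s - d) = 1 - d"
      using t that assms by (simp add: frac_unique_iff e_def)
    then show ?thesis
      using True that by (simp add: e_def indicator_def)
  next
    case False
    then have "frac (s - d) = t - d"
      using t that assms by (simp add: frac_unique_iff e_def split: if_splits)
    then show ?thesis
      using False t that by (simp add: e_def indicator_def split: if_splits)
  qed
  ultimately show ?thesis
    unfolding t_def by blast
qed

lemma windows_v_pot_in_vt_pot:
  assumes "\<alpha> \<notin> \<rat>" "0 \<le> \<alpha>" "\<alpha> \<le> 1"
  shows "windows_occur_in (v_pot \<alpha> \<theta>') (vt_pot \<alpha> \<theta>)"
proof -
  have "0 < \<alpha>" "\<alpha> < 1"
    using assms by (auto simp: order.order_iff_strict)
  then show ?thesis
    using windows_occur_in_right_limits[OF assms(1) _ sturmian_right_limit]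
    by (simp add: v_pot_def[abs_def] vt_pot_def[abs_def])
qed

lemma windows_vt_pot_in_v_pot:
  assumes "\<alpha> \<notin> \<rat>" "0 \<le> \<alpha>" "\<alpha> \<le> 1"
  shows "windows_occur_in (vt_pot \<alpha> \<theta>') (v_pot \<alpha> \<theta>)"
proof -
  have "0 < \<alpha>" "\<alpha> < 1"
    using assms by (auto simp: order.order_iff_strict)
  then show ?thesis
    using windows_occur_in_left_limits[OF assms(1) _ sturmian_left_limit]
    by (simp add: v_pot_def[abs_def] vt_pot_def[abs_def])
qed

theorem proposition5p2:
  fixes p :: ennreal and \<alpha> \<theta> lam :: real
  assumes "1 \<le> p"
    and "0 \<le> \<alpha>" "\<alpha> \<le> 1" "\<alpha> \<notin> \<rat>"
    and "0 \<le> \<theta>" "\<theta> < 1"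
  shows "lp_spectrum p (H_op lam \<alpha> 0) = lp_spectrum p (Ht_op lam \<alpha> \<theta>)
       \<and> lp_spectrum p (Ht_op lam \<alpha> \<theta>) = lp_spectrum p (H_op lam \<alpha> \<theta>)"
proof -
  define V where "V s = complex_of_real (lam * s)" for s
  have H: "H_op lam \<alpha> t = schroedinger_op (\<lambda>n. V (v_pot \<alpha> t n))"
    and Ht: "Ht_op lam \<alpha> t = schroedinger_op (\<lambda>n. V (vt_pot \<alpha> t n))" for t
    by (simp_all add: fun_eq_iff H_op_def Ht_op_def schroedinger_op_def V_def)
  have "lp_spectrum p (H_op lam \<alpha> t) = lp_spectrum p (Ht_op lam \<alpha> t')" for t t'
    unfolding H Ht
  proof (rule lp_spectrum_eq_if_windows[OF assms(1)])
    show "norm (V (v_pot \<alpha> t n)) \<le> \<bar>lam\<bar>" for n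
      by (simp add: V_def v_pot_def indicator_def)
    show "windows_occur_in (\<lambda>n. V (vt_pot \<alpha> t' n)) (\<lambda>n. V (v_pot \<alpha> t n))"
      by (rule windows_occur_in_map[OF windows_vt_pot_in_v_pot[OF assms(4,2,3)]])
    show "windows_occur_in (\<lambda>n. V (v_pot \<alpha> t n)) (\<lambda>n. V (vt_pot \<alpha> t' n))"
      by (rule windows_occur_in_map[OF windows_v_pot_in_vt_pot[OF assms(4,2,3)]])
  qed
  then show ?thesis
    by metis
qed

end
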